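(* For parameters $a,b\in[0,1]$ define $f_{a,b}:[0,1]\to[0,1]$ by $$f_{a,b}(x)=\begin{cases}(1-2a)x^2+2ax, & x\in[0,\frac13],\\ (1-2b)x^2+2bx, & x\in(\frac13,\frac23),\\ x, & x\in[\frac23,1].\end{cases}$$ For each pair $x_1,x_2$ satisfying $$x_1\in\Big(1-\tfrac{\sqrt6}{3},\tfrac13\Big),\qquad x_2\in\Big(\tfrac13,\,x_1(2-x_1)\Big),$$ there exists a unique pair $a,b$ such that $x_1,x_2$ is a 2-periodic orbit of $f_{a,b}$, i.e. $f_{a,b}(x_1)=x_2$ and $f_{a,b}(x_2)=x_1$.
   Context: A 2-periodic orbit $x_1,x_2$ here means $x_1\ne x_2$ with $f_{a,b}(x_1)=x_2$, $f_{a,b}(x_2)=x_1$. The map $f_{a,b}$ is the reduction to $[0,1]$ of the quadratic stochastic operator $x'=x^2+2p(x)xy$, $y'=2(1-p(x))xy+y^2$ (with $y=1-x$), where $p(x)=a$ for $x\le\frac13$, $b$ for $\frac13<x<\frac23$, and $\frac12$ for $x\ge\frac23$. *)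

theory Defs
  imports Complex_Main
begin

definition f_ab :: "real \<Rightarrow> real \<Rightarrow> real \<Rightarrow> real" where
  "f_ab a b x =
     (if x \<le> 1/3 then (1 - 2*a) * x^2 + 2*a*x
      else if x < 2/3 then (1 - 2*b) * x^2 + 2*b*x
      else x)"

definition two_periodic_orbit :: "(real \<Rightarrow> real) \<Rightarrow> real \<Rightarrow> real \<Rightarrow> bool" where
  "two_periodic_orbit f x1 x2 \<longleftrightarrow> x1 \<noteq> x2 \<and> f x1 = x2 \<and> f x2 = x1"

end

theory Submission
  imports Defs
begin

text \<open>On each of its first two pieces, \<open>f_ab\<close> is the one-dimensional form
  \<open>x' = x\<^sup>2 + 2 p x (1 - x)\<close> of the operator with constant \<open>p\<close>. For fixed \<open>x \<in> (0,1)\<close>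
  this is affine and strictly increasing in \<open>p\<close>, with range \<open>[x\<^sup>2, x (2 - x)]\<close> over
  \<open>p \<in> [0,1]\<close>. So \<open>a\<close> is determined by \<open>f(x\<^sub>1) = x\<^sub>2\<close> and \<open>b\<close> by \<open>f(x\<^sub>2) = x\<^sub>1\<close>, and
  both lie in \<open>[0,1]\<close> exactly when \<open>x\<^sub>1\<^sup>2 \<le> x\<^sub>2 \<le> x\<^sub>1 (2 - x\<^sub>1)\<close> and
  \<open>x\<^sub>2\<^sup>2 \<le> x\<^sub>1 \<le> x\<^sub>2 (2 - x\<^sub>2)\<close>, which the hypotheses guarantee.\<close>

definition qso_map :: "real \<Rightarrow> real \<Rightarrow> real" where
  "qso_map p x = x\<^sup>2 + 2 * p * x * (1 - x)"

lemma f_ab_eq_qso_map: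
  "f_ab a b x = (if x \<le> 1/3 then qso_map a x else if x < 2/3 then qso_map b x else x)"
  by (simp add: f_ab_def qso_map_def algebra_simps power2_eq_square)

lemma qso_map_eq_iff:
  assumes "0 < x" "x < 1"
  shows "qso_map p x = y \<longleftrightarrow> p = (y - x\<^sup>2) / (2 * x * (1 - x))"
  using assms by (auto simp: qso_map_def field_simps)

lemma ex1_qso_map_param:
  assumes "0 < x" "x < 1" "x\<^sup>2 \<le> y" "y \<le> x * (2 - x)"
  shows "\<exists>!p. p \<in> {0..1} \<and> qso_map p x = y"
proof -
  have pos: "0 < 2 * x * (1 - x)"
    using assms(1,2) by simp
  have "y - x\<^sup>2 \<le> 2 * x * (1 - x)"
    using assms(4) by (simp add: algebra_simps power2_eq_square)
  then have "(y - x\<^sup>2) / (2 * x * (1 - x)) \<in> {0..1}"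
    using assms(3) pos by simp
  then show ?thesis
    using qso_map_eq_iff[OF assms(1,2)] by auto
qed

lemma mul_two_minus_less_5_9:
  fixes x :: real
  assumes "x < 1/3"
  shows "x * (2 - x) < 5/9"
proof -
  have "0 < (1/3 - x) * (5/3 - x)"
    using assms by simp
  moreover have "(1/3 - x) * (5/3 - x) = 5/9 - x * (2 - x)"
    by (simp add: field_simps)
  ultimately show ?thesis
    by linarith
qed

lemma square_mul_two_minus_less:
  fixes x :: real
  assumes "0 < x" "x \<le> 1/3"
  shows "(x * (2 - x))\<^sup>2 < x"
proof -
  have "0 \<le> x\<^sup>2 - 11/3 * x + 25/9"
    using assms zero_le_power2[of x] by linarith
  then have "0 \<le> (1/3 - x) * (x\<^sup>2 - 11/3 * x + 25/9)"
    using assms(2) by simp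
  moreover have "(1/3 - x) * (x\<^sup>2 - 11/3 * x + 25/9) = 25/27 - x * (2 - x)\<^sup>2"
    by (simp add: field_simps power2_eq_square)
  ultimately have "x * (2 - x)\<^sup>2 < 1"
    by linarith
  then have "x * (x * (2 - x)\<^sup>2) < x"
    using assms(1) by simp
  moreover have "(x * (2 - x))\<^sup>2 = x * (x * (2 - x)\<^sup>2)"
    by (simp add: power2_eq_square)
  ultimately show ?thesis
    by simp
qed

lemma less_mul_two_minus:
  fixes x :: real
  assumes "0 < x" "x < 1"
  shows "x < x * (2 - x)"
proof -
  have "0 < x * (1 - x)"
    using assms by simp
  then show ?thesis
    by (simp add: algebra_simps)
qed

lemma Ex1_prod_conj:
  assumes "\<exists>!a. P a" "\<exists>!b. Q b"
  shows "\<exists>!(a, b). P a \<and> Q b"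
  using assms by (auto simp: split_def)

theorem theorem2p5:
  fixes x1 x2 :: real
  assumes "1 - sqrt 6 / 3 < x1" and "x1 < 1/3"
      and "1/3 < x2" and "x2 < x1 * (2 - x1)"
  shows "\<exists>!(a, b). a \<in> {0..1} \<and> b \<in> {0..1} \<and> two_periodic_orbit (f_ab a b) x1 x2"
proof -
  have "sqrt 6 < 3"
    using real_sqrt_less_iff[of 6 "3\<^sup>2"] by simp
  then have "0 < x1"
    using assms(1) by linarith
  have "x2 < 2/3"
    using mul_two_minus_less_5_9[OF assms(2)] assms(4) by linarith
  have "x2\<^sup>2 < (x1 * (2 - x1))\<^sup>2"
    using assms(3,4) by (intro power_strict_mono) auto
  then have "x2\<^sup>2 < x1"
    using square_mul_two_minus_less[of x1] \<open>0 < x1\<close> assms(2) by simp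
  have "\<exists>!a. a \<in> {0..1} \<and> qso_map a x1 = x2"
    using \<open>0 < x1\<close> assms(2-4) power_strict_decreasing[of 1 2 x1]
    by (intro ex1_qso_map_param) auto
  moreover have "\<exists>!b. b \<in> {0..1} \<and> qso_map b x2 = x1"
  proof (intro ex1_qso_map_param)
    have "x2 < x2 * (2 - x2)"
      using assms(3) \<open>x2 < 2/3\<close> by (intro less_mul_two_minus) auto
    then show "x1 \<le> x2 * (2 - x2)"
      using assms(2,3) by linarith
  qed (use assms(3) \<open>x2 < 2/3\<close> \<open>x2\<^sup>2 < x1\<close> in auto)
  ultimately have "\<exists>!(a, b). (a \<in> {0..1} \<and> qso_map a x1 = x2) \<and> (b \<in> {0..1} \<and> qso_map b x2 = x1)"
    by (rule Ex1_prod_conj)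
  moreover have "two_periodic_orbit (f_ab a b) x1 x2 \<longleftrightarrow> qso_map a x1 = x2 \<and> qso_map b x2 = x1"
    for a b
    using assms(2,3) \<open>x2 < 2/3\<close> by (auto simp: two_periodic_orbit_def f_ab_eq_qso_map)
  ultimately show ?thesis
    by (simp only: conj_ac)
qed

end
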